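(* Consider $K$ arms, each a two-state irreducible Markov chain on $\{0,1\}$ with transition probabilities $p_{01}^i,p_{10}^i$, let $\sigma_i=p_{01}^i+p_{10}^i$, $\mu_i=p_{01}^i/\sigma_i$, arm 1 optimal ($\mu_1=\max_j\mu_j$), $\Delta_i=\mu_1-\mu_i$, and let $U=\sum_{i\neq1}\frac{4L}{\mu_1-\mu_i}$ with $L=\frac{360}{\min_j\sigma_j}$. Define $B_a=\sum_{i\neq1}\Delta_i\Big[\frac{2\,\mathbb 1\{p_{01}^1p_{10}^i<p_{10}^1\}}{D(p_{01}^i\|\frac{p_{01}^1p_{10}^i}{p_{10}^1})}+\frac{2}{D(p_{10}^i\|\frac{p_{10}^1p_{01}^i}{p_{01}^1})}\Big]$, $B_b=\sum_{i\neq1}\Delta_i\Big[\frac{\mathbb 1\{\mu_1p_{10}^i<1-\mu_1\}}{D(p_{01}^i\|\frac{\mu_1p_{10}^i}{1-\mu_1})}+\frac{1}{D(p_{10}^i\|\frac{p_{01}^i(1-\mu_1)}{\mu_1})}\Big]$, $B_c=\sum_{i\neq1}\frac{2\Delta_i}{D(\mu_i\|\frac{p_{01}^1}{p_{01}^1+p_{10}^1})}$, $B_d=\sum_{i\neq1}\frac{\Delta_i}{D(\mu_i\|\mu_1)}$. Then: (i) if every suboptimal arm is i.i.d. ($\sigma_i=1$ for $i\neq1$), the asymptotic regret bound of TV-KL-UCB ($B_c$ if arm 1 is truly Markovian, $B_d$ if arm 1 is i.i.d.) is smaller than $U$; (ii) if every suboptimal arm is truly Markovian ($\sigma_i\ne1$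 for $i\neq1$) and $\min_j\sigma_j\ge\frac1{1440}$, the asymptotic regret bound of TV-KL-UCB ($B_a$ if arm 1 is truly Markovian, $B_b$ if arm 1 is i.i.d.) is smaller than $U$.
   Context: $D(a\|b)=a\log\frac ab+(1-a)\log\frac{1-a}{1-b}$ is the Bernoulli KL divergence. An arm is i.i.d. if $p_{01}^i+p_{10}^i=1$ and truly Markovian otherwise. The quantities $B_a,\dots,B_d$ are the upper bounds on $\limsup_n R_n/\log n$ for the TV-KL-UCB algorithm in the respective cases, and $U$ is the asymptotic regret upper bound (on $\limsup_n R_n/\log n$) of the sample-mean UCB algorithm UCB-SM of Tekin and Liu for two-state arms with reward $r(s)=s$. *)

theory Defs
  imports Complex_Main
begin

text \<open>Bernoulli KL divergence, natural logarithm (convention 0 log 0 = 0 is automatic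
since 0 * x = 0).\<close>
definition klB :: "real \<Rightarrow> real \<Rightarrow> real" where
  "klB a b = a * ln (a / b) + (1 - a) * ln ((1 - a) / (1 - b))"

text \<open>Arms are indexed 1..K; arm i has transition probabilities p01 i, p10 i.\<close>
definition sig :: "(nat \<Rightarrow> real) \<Rightarrow> (nat \<Rightarrow> real) \<Rightarrow> nat \<Rightarrow> real" where
  "sig p01 p10 i = p01 i + p10 i"

definition mu :: "(nat \<Rightarrow> real) \<Rightarrow> (nat \<Rightarrow> real) \<Rightarrow> nat \<Rightarrow> real" where
  "mu p01 p10 i = p01 i / sig p01 p10 i"

definition gap :: "(nat \<Rightarrow> real) \<Rightarrow> (nat \<Rightarrow> real) \<Rightarrow> nat \<Rightarrow> real" where
  "gap p01 p10 i = mu p01 p10 1 - mu p01 p10 i"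

definition Lconst :: "nat \<Rightarrow> (nat \<Rightarrow> real) \<Rightarrow> (nat \<Rightarrow> real) \<Rightarrow> real" where
  "Lconst K p01 p10 = 360 / Min (sig p01 p10 ` {1..K})"

definition U_SM :: "nat \<Rightarrow> (nat \<Rightarrow> real) \<Rightarrow> (nat \<Rightarrow> real) \<Rightarrow> real" where
  "U_SM K p01 p10 = (\<Sum>i\<in>{2..K}. 4 * Lconst K p01 p10 / (mu p01 p10 1 - mu p01 p10 i))"

definition B_a :: "nat \<Rightarrow> (nat \<Rightarrow> real) \<Rightarrow> (nat \<Rightarrow> real) \<Rightarrow> real" where
  "B_a K p01 p10 = (\<Sum>i\<in>{2..K}. gap p01 p10 i *
     ((if p01 1 * p10 i < p10 1
       then 2 / klB (p01 i) (p01 1 * p10 i / p10 1) else 0)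
      + 2 / klB (p10 i) (p10 1 * p01 i / p01 1)))"

definition B_b :: "nat \<Rightarrow> (nat \<Rightarrow> real) \<Rightarrow> (nat \<Rightarrow> real) \<Rightarrow> real" where
  "B_b K p01 p10 = (\<Sum>i\<in>{2..K}. gap p01 p10 i *
     ((if mu p01 p10 1 * p10 i < 1 - mu p01 p10 1
       then 1 / klB (p01 i) (mu p01 p10 1 * p10 i / (1 - mu p01 p10 1)) else 0)
      + 1 / klB (p10 i) (p01 i * (1 - mu p01 p10 1) / mu p01 p10 1)))"

definition B_c :: "nat \<Rightarrow> (nat \<Rightarrow> real) \<Rightarrow> (nat \<Rightarrow> real) \<Rightarrow> real" where
  "B_c K p01 p10 = (\<Sum>i\<in>{2..K}. 2 * gap p01 p10 i /
     klB (mu p01 p10 i) (p01 1 / (p01 1 + p10 1)))"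

definition B_d :: "nat \<Rightarrow> (nat \<Rightarrow> real) \<Rightarrow> (nat \<Rightarrow> real) \<Rightarrow> real" where
  "B_d K p01 p10 = (\<Sum>i\<in>{2..K}. gap p01 p10 i / klB (mu p01 p10 i) (mu p01 p10 1))"

end

theory Submission
  imports Defs
begin

text \<open>
  Every Bernoulli divergence occurring in the four bounds dominates a squared difference of means:
  by the Hellinger bound \<open>(\<surd>a - \<surd>b)\<^sup>2 \<le> D(a\<parallel>b)\<close> one has
  \<open>(a - b)\<^sup>2 \<le> 2(a + b) D(a\<parallel>b)\<close>. For a suboptimal arm \<open>i\<close> the gap \<open>\<Delta>\<^sub>i\<close> is a multiple of the
  difference between the two arguments of each divergence, which gives
  \<open>\<Delta>\<^sub>i / D \<le> 4 / (\<sigma>\<^sub>i \<Delta>\<^sub>i)\<close>. Hence each summand of \<open>B\<^sub>a, \<dots>, B\<^sub>d\<close> is at most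
  \<open>16 / (\<sigma>\<^sub>i \<Delta>\<^sub>i)\<close>, while the corresponding summand of \<open>U\<close> is \<open>1440 / (min\<^sub>j \<sigma>\<^sub>j \<cdot> \<Delta>\<^sub>i)\<close>.
\<close>

lemma mult_ln_div_ge:
  fixes a b :: real
  assumes "0 \<le> a" "0 < b"
  shows "2 * (a - sqrt (a * b)) \<le> a * ln (a / b)"
proof (cases "a = 0")
  case False
  with assms have a: "0 < a" by simp
  have "ln (sqrt (b / a)) \<le> sqrt (b / a) - 1"
    using a assms by (intro ln_le_minus_one) simp
  then have "- ln (a / b) \<le> 2 * (sqrt (b / a) - 1)"
    using a assms by (simp add: ln_sqrt ln_div)
  then have "a * (- ln (a / b)) \<le> a * (2 * (sqrt (b / a) - 1))"
    using a by (intro mult_left_mono) auto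
  moreover have "a * sqrt (b / a) = sqrt (a * b)"
    using a by (simp add: real_sqrt_divide real_sqrt_mult field_simps)
  ultimately show ?thesis by (simp add: algebra_simps)
qed simp

lemma klB_ge_hellinger:
  fixes a b :: real
  assumes "0 \<le> a" "a \<le> 1" "0 < b" "b < 1"
  shows "(sqrt a - sqrt b)\<^sup>2 \<le> klB a b"
proof -
  have "2 * (a - sqrt (a * b)) \<le> a * ln (a / b)"
    using assms by (intro mult_ln_div_ge) auto
  moreover have "2 * ((1 - a) - sqrt ((1 - a) * (1 - b))) \<le> (1 - a) * ln ((1 - a) / (1 - b))"
    using assms by (intro mult_ln_div_ge) auto
  moreover have "sqrt ((1 - a) * (1 - b)) \<le> ((1 - a) + (1 - b)) / 2"
    using assms by (intro arith_geo_mean_sqrt) auto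
  moreover have "(sqrt a - sqrt b)\<^sup>2 = a + b - 2 * sqrt (a * b)"
    using assms by (simp add: power2_diff real_sqrt_mult)
  ultimately show ?thesis
    unfolding klB_def by argo
qed

lemma sq_diff_le_klB:
  fixes a b :: real
  assumes "0 \<le> a" "a \<le> 1" "0 < b" "b < 1"
  shows "(a - b)\<^sup>2 \<le> 2 * (a + b) * klB a b"
proof -
  have "(a - b)\<^sup>2 = (sqrt a - sqrt b)\<^sup>2 * (sqrt a + sqrt b)\<^sup>2"
    using assms by (simp flip: power_mult_distrib add: algebra_simps power2_eq_square)
  also have "\<dots> \<le> klB a b * (2 * (a + b))"
  proof (rule mult_mono)
    show "(sqrt a + sqrt b)\<^sup>2 \<le> 2 * (a + b)"
      using assms arith_geo_mean_sqrt[of a b] by (simp add: power2_sum real_sqrt_mult)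
    show "0 \<le> klB a b"
      using klB_ge_hellinger[OF assms] by (meson order_trans zero_le_power2)
  qed (use klB_ge_hellinger[OF assms] in auto)
  finally show ?thesis by (simp add: mult_ac)
qed

lemma div_klB_le:
  fixes a b d k s :: real
  assumes "0 \<le> a" "a \<le> 1" "0 < b" "b < 1" "0 < d" "0 < s"
    and "d = \<bar>a - b\<bar> * k" "k\<^sup>2 * s * (a + b) \<le> 2"
  shows "d / klB a b \<le> 4 / (s * d)"
proof -
  have "d\<^sup>2 * s * (a + b) = (a - b)\<^sup>2 * (k\<^sup>2 * s * (a + b))"
    using assms(7) by (simp add: power_mult_distrib mult_ac)
  also have "\<dots> \<le> (a - b)\<^sup>2 * 2"
    using assms(8) by (simp add: mult_left_mono)
  also have "\<dots> \<le> 4 * klB a b * (a + b)"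
    using sq_diff_le_klB[OF assms(1-4)] by (simp add: algebra_simps)
  finally have "d\<^sup>2 * s \<le> 4 * klB a b"
    using assms by (simp add: mult_le_cancel_right)
  moreover have "0 < d\<^sup>2 * s" using assms(5,6) by simp
  ultimately have "0 < klB a b" by linarith
  with \<open>d\<^sup>2 * s \<le> 4 * klB a b\<close> show ?thesis
    using assms(5,6) by (simp add: field_simps power2_eq_square)
qed

lemma diff_div_klB_le:
  fixes a b :: real
  assumes "0 \<le> a" "a < b" "b < 1"
  shows "(b - a) / klB a b \<le> 4 / (b - a)"
proof -
  have "b - a = \<bar>a - b\<bar> * 1" "1\<^sup>2 * 1 * (a + b) \<le> (2::real)"
    using assms by auto
  from div_klB_le[OF _ _ _ _ _ _ this] assms show ?thesis
    by simp
qed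

lemma mult_div_le_of_div_le:
  fixes a c d D :: real
  assumes "d / D \<le> c" "0 \<le> a"
  shows "d * (a / D) \<le> a * c"
proof -
  have "d * (a / D) = a * (d / D)" by simp
  also have "\<dots> \<le> a * c" using assms by (rule mult_left_mono)
  finally show ?thesis .
qed

lemma mult_if_add_div_le:
  fixes c d w D1 D2 :: real
  assumes "0 < c" "0 \<le> w" "w \<le> 2" "P \<Longrightarrow> d / D1 \<le> c" "d / D2 \<le> c"
  shows "d * ((if P then w / D1 else 0) + w / D2) \<le> 4 * c"
proof -
  have "d * (if P then w / D1 else 0) \<le> w * c"
    using assms mult_div_le_of_div_le[of d D1 c w] by auto
  moreover have "d * (w / D2) \<le> w * c"
    using assms by (intro mult_div_le_of_div_le)
  moreover have "w * c \<le> 2 * c"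
    using assms by simp
  ultimately show ?thesis
    unfolding distrib_left by linarith
qed

text \<open>Here \<open>(x, y)\<close> are the transition probabilities \<open>(p\<^sub>0\<^sub>1, p\<^sub>1\<^sub>0)\<close> of the optimal arm and
  \<open>(u, v)\<close> those of a suboptimal one.\<close>

context
  fixes x y u v :: real
  assumes pos: "0 < x" "0 < y" "0 < u" "0 < v"
    and le1: "u \<le> 1" "v \<le> 1"
    and mean_less: "u / (u + v) < x / (x + y)"
begin

lemma cross_less: "u * y < x * v"
  using pos mean_less by (simp add: field_simps)

lemma mean_diff_p10_div_klB_le:
  "(x / (x + y) - u / (u + v)) / klB v (y * u / x) \<le> 4 / ((u + v) * (x / (x + y) - u / (u + v)))"
proof -
  define b where "b = y * u / x"
  define k where "k = x / ((x + y) * (u + v))"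
  have b: "0 < b" "b < v" using pos cross_less by (simp_all add: b_def field_simps)
  then have "b < 1" using le1 by linarith
  have "x / (x + y) - u / (u + v) = (v - b) * k"
    using pos by (simp add: b_def k_def divide_simps) (simp add: algebra_simps)
  then have diff: "x / (x + y) - u / (u + v) = \<bar>v - b\<bar> * k"
    using b by simp
  have "k\<^sup>2 * (u + v) * (v + b) \<le> 2"
  proof -
    have "k\<^sup>2 * (u + v) * (v + b) = x\<^sup>2 * (v + b) / ((x + y)\<^sup>2 * (u + v))"
      using pos by (simp add: k_def power_divide power_mult_distrib power2_eq_square)
    also have "\<dots> \<le> 2"
    proof -
      have "x\<^sup>2 * (v + b) \<le> (x + y)\<^sup>2 * (2 * (u + v))"
        using pos b by (intro mult_mono power_mono) auto
      moreover have "0 < (x + y)\<^sup>2 * (u + v)" using pos by simp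
      ultimately show ?thesis
        by (subst pos_divide_le_eq) (auto simp: algebra_simps)
    qed
    finally show ?thesis .
  qed
  then show ?thesis
    unfolding b_def[symmetric]
    using pos le1 b \<open>b < 1\<close> mean_less by (intro div_klB_le[OF _ _ _ _ _ _ diff]) simp_all
qed

lemma mean_diff_p01_div_klB_le:
  assumes "x * v < y"
  shows "(x / (x + y) - u / (u + v)) / klB u (x * v / y) \<le> 4 / ((u + v) * (x / (x + y) - u / (u + v)))"
proof -
  define b where "b = x * v / y"
  define k where "k = y / ((x + y) * (u + v))"
  have b: "u < b" "b < 1" using pos cross_less assms by (simp_all add: b_def field_simps)
  have "x / (x + y) - u / (u + v) = (b - u) * k"
    using pos by (simp add: b_def k_def divide_simps) (simp add: algebra_simps)
  then have diff: "x / (x + y) - u / (u + v) = \<bar>u - b\<bar> * k"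
    using b by simp
  have "k\<^sup>2 * (u + v) * (u + b) \<le> 2"
  proof -
    have "k\<^sup>2 * (u + v) * (u + b) = y\<^sup>2 * (u + b) / ((x + y)\<^sup>2 * (u + v))"
      using pos by (simp add: k_def power_divide power_mult_distrib power2_eq_square)
    also have "\<dots> \<le> 2"
    proof -
      have "y\<^sup>2 * (u + b) = y\<^sup>2 * u + x * y * v"
        using pos by (simp add: b_def power2_eq_square algebra_simps)
      moreover have "y\<^sup>2 * u \<le> (x + y)\<^sup>2 * u" "x * y * v \<le> (x + y)\<^sup>2 * v"
        using pos by (auto intro!: mult_right_mono simp: power2_eq_square algebra_simps)
      moreover have "(x + y)\<^sup>2 * u + (x + y)\<^sup>2 * v \<le> (x + y)\<^sup>2 * (2 * (u + v))"
        using pos by (simp add: algebra_simps)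
      ultimately have "y\<^sup>2 * (u + b) \<le> (x + y)\<^sup>2 * (2 * (u + v))"
        by linarith
      moreover have "0 < (x + y)\<^sup>2 * (u + v)" using pos by simp
      ultimately show ?thesis
        by (subst pos_divide_le_eq) (auto simp: algebra_simps)
    qed
    finally show ?thesis .
  qed
  then show ?thesis
    unfolding b_def[symmetric]
    using pos le1 b mean_less by (intro div_klB_le[OF _ _ _ _ _ _ diff]) simp_all
qed

end

locale two_state_arms =
  fixes K :: nat and p01 p10 :: "nat \<Rightarrow> real"
  assumes K2: "K \<ge> 2"
    and p01_range: "\<And>i. i \<in> {1..K} \<Longrightarrow> 0 < p01 i \<and> p01 i \<le> 1"
    and p10_range: "\<And>i. i \<in> {1..K} \<Longrightarrow> 0 < p10 i \<and> p10 i \<le> 1"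
    and opt: "\<And>i. i \<in> {2..K} \<Longrightarrow> mu p01 p10 i < mu p01 p10 1"
begin

lemma sig_pos: "i \<in> {1..K} \<Longrightarrow> 0 < sig p01 p10 i"
  using p01_range p10_range by (simp add: sig_def add_pos_pos)

lemma mu_bounds: "i \<in> {1..K} \<Longrightarrow> 0 < mu p01 p10 i \<and> mu p01 p10 i < 1"
  using p01_range p10_range sig_pos by (simp add: mu_def sig_def field_simps)

lemma gap_pos: "i \<in> {2..K} \<Longrightarrow> 0 < gap p01 p10 i"
  using opt by (simp add: gap_def)

lemma arm_params:
  assumes "i \<in> {2..K}"
  shows "0 < p01 1" "0 < p10 1" "0 < p01 i" "0 < p10 i" "p01 i \<le> 1" "p10 i \<le> 1"
    and "p01 i / (p01 i + p10 i) < p01 1 / (p01 1 + p10 1)"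
  using assms K2 p01_range[of 1] p10_range[of 1] p01_range[of i] p10_range[of i] opt[OF assms]
  by (auto simp: mu_def sig_def)

lemma gap_eq: "gap p01 p10 i = p01 1 / (p01 1 + p10 1) - p01 i / (p01 i + p10 i)"
  by (simp add: gap_def mu_def sig_def)

lemma sum_lt_U_SM:
  assumes "\<And>i. i \<in> {2..K} \<Longrightarrow> f i \<le> 16 / (sig p01 p10 i * gap p01 p10 i)"
  shows "sum f {2..K} < U_SM K p01 p10"
proof -
  define m where "m = Min (sig p01 p10 ` {1..K})"
  have m_pos: "0 < m"
    unfolding m_def using K2 sig_pos by (subst Min_gr_iff) auto
  have "f i < 4 * Lconst K p01 p10 / (mu p01 p10 1 - mu p01 p10 i)" if i: "i \<in> {2..K}" for i
  proof -
    have "m \<le> sig p01 p10 i" unfolding m_def using i by (intro Min_le) auto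
    then have "16 / (sig p01 p10 i * gap p01 p10 i) \<le> 16 / (m * gap p01 p10 i)"
      using m_pos gap_pos[OF i] by (intro divide_left_mono mult_right_mono mult_pos_pos) auto
    also have "\<dots> < 1440 / (m * gap p01 p10 i)"
      using m_pos gap_pos[OF i] by (intro divide_strict_right_mono) auto
    also have "\<dots> = 4 * Lconst K p01 p10 / (mu p01 p10 1 - mu p01 p10 i)"
      unfolding Lconst_def m_def gap_def by simp
    finally show ?thesis using assms[OF i] by linarith
  qed
  then show ?thesis
    unfolding U_SM_def using K2 by (intro sum_strict_mono) auto
qed

lemma markov_div_klB_le:
  assumes "i \<in> {2..K}"
  shows "gap p01 p10 i / klB (p10 i) (p10 1 * p01 i / p01 1)
      \<le> 4 / (sig p01 p10 i * gap p01 p10 i)"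
    and "p01 1 * p10 i < p10 1 \<Longrightarrow> gap p01 p10 i / klB (p01 i) (p01 1 * p10 i / p10 1)
      \<le> 4 / (sig p01 p10 i * gap p01 p10 i)"
  using mean_diff_p10_div_klB_le[OF arm_params[OF assms]]
    mean_diff_p01_div_klB_le[OF arm_params[OF assms]]
  by (simp_all add: gap_eq sig_def)

lemma iid_div_klB_le:
  assumes "i \<in> {2..K}"
  shows "gap p01 p10 i / klB (mu p01 p10 i) (mu p01 p10 1) \<le> 4 / gap p01 p10 i"
  using diff_div_klB_le[of "mu p01 p10 i" "mu p01 p10 1"] assms K2 opt mu_bounds
  by (simp add: gap_def less_imp_le)

lemma B_a_lt_U_SM: "B_a K p01 p10 < U_SM K p01 p10"
  unfolding B_a_def
proof (rule sum_lt_U_SM)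
  fix i assume i: "i \<in> {2..K}"
  have "0 < 4 / (sig p01 p10 i * gap p01 p10 i)" using sig_pos[of i] gap_pos[OF i] i by simp
  from mult_if_add_div_le[OF this _ _ markov_div_klB_le(2)[OF i] markov_div_klB_le(1)[OF i], of 2]
  show "gap p01 p10 i * ((if p01 1 * p10 i < p10 1 then 2 / klB (p01 i) (p01 1 * p10 i / p10 1) else 0)
      + 2 / klB (p10 i) (p10 1 * p01 i / p01 1)) \<le> 16 / (sig p01 p10 i * gap p01 p10 i)"
    by simp
qed

lemma B_b_lt_U_SM:
  assumes "sig p01 p10 1 = 1"
  shows "B_b K p01 p10 < U_SM K p01 p10"
proof -
  have mu1: "mu p01 p10 1 = p01 1" "1 - p01 1 = p10 1"
    using assms by (simp_all add: mu_def sig_def)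
  show ?thesis
    unfolding B_b_def mu1
  proof (rule sum_lt_U_SM)
    fix i assume i: "i \<in> {2..K}"
    have "0 < 4 / (sig p01 p10 i * gap p01 p10 i)" using sig_pos[of i] gap_pos[OF i] i by simp
    from mult_if_add_div_le[OF this _ _ markov_div_klB_le(2)[OF i] markov_div_klB_le(1)[OF i], of 1]
    show "gap p01 p10 i * ((if p01 1 * p10 i < p10 1 then 1 / klB (p01 i) (p01 1 * p10 i / p10 1) else 0)
        + 1 / klB (p10 i) (p01 i * p10 1 / p01 1)) \<le> 16 / (sig p01 p10 i * gap p01 p10 i)"
      by (simp add: mult.commute)
  qed
qed

lemma B_c_lt_U_SM:
  assumes "\<And>i. i \<in> {2..K} \<Longrightarrow> sig p01 p10 i = 1"
  shows "B_c K p01 p10 < U_SM K p01 p10"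
  unfolding B_c_def
proof (rule sum_lt_U_SM)
  fix i assume i: "i \<in> {2..K}"
  have "2 * gap p01 p10 i / klB (mu p01 p10 i) (mu p01 p10 1) \<le> 2 * (4 / gap p01 p10 i)"
    using iid_div_klB_le[OF i] by simp
  also have "\<dots> \<le> 16 / (sig p01 p10 i * gap p01 p10 i)"
    using assms[OF i] gap_pos[OF i] by (simp add: divide_right_mono)
  finally show "2 * gap p01 p10 i / klB (mu p01 p10 i) (p01 1 / (p01 1 + p10 1))
      \<le> 16 / (sig p01 p10 i * gap p01 p10 i)"
    by (simp add: mu_def sig_def)
qed

lemma B_d_lt_U_SM:
  assumes "\<And>i. i \<in> {2..K} \<Longrightarrow> sig p01 p10 i = 1"
  shows "B_d K p01 p10 < U_SM K p01 p10"
  unfolding B_d_def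
proof (rule sum_lt_U_SM)
  fix i assume i: "i \<in> {2..K}"
  have "gap p01 p10 i / klB (mu p01 p10 i) (mu p01 p10 1) \<le> 4 / gap p01 p10 i"
    by (rule iid_div_klB_le[OF i])
  also have "\<dots> \<le> 16 / (sig p01 p10 i * gap p01 p10 i)"
    using assms[OF i] gap_pos[OF i] by (simp add: divide_right_mono)
  finally show "gap p01 p10 i / klB (mu p01 p10 i) (mu p01 p10 1)
      \<le> 16 / (sig p01 p10 i * gap p01 p10 i)" .
qed

end

theorem theorem2:
  fixes K :: nat and p01 p10 :: "nat \<Rightarrow> real"
  assumes K2: "K \<ge> 2"
    and p01_range: "\<And>i. i \<in> {1..K} \<Longrightarrow> 0 < p01 i \<and> p01 i \<le> 1"
    and p10_range: "\<And>i. i \<in> {1..K} \<Longrightarrow> 0 < p10 i \<and> p10 i \<le> 1"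
    and opt: "\<And>i. i \<in> {2..K} \<Longrightarrow> mu p01 p10 i < mu p01 p10 1"
  shows "((\<forall>i\<in>{2..K}. sig p01 p10 i = 1) \<longrightarrow>
            (if sig p01 p10 1 \<noteq> 1 then B_c K p01 p10 else B_d K p01 p10) < U_SM K p01 p10)
       \<and> ((\<forall>i\<in>{2..K}. sig p01 p10 i \<noteq> 1) \<and> Min (sig p01 p10 ` {1..K}) \<ge> 1/1440 \<longrightarrow>
            (if sig p01 p10 1 \<noteq> 1 then B_a K p01 p10 else B_b K p01 p10) < U_SM K p01 p10)"
proof -
  interpret two_state_arms K p01 p10
    using K2 p01_range p10_range opt by unfold_locales
  show ?thesis
    using B_a_lt_U_SM B_b_lt_U_SM B_c_lt_U_SM B_d_lt_U_SM by auto
qed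

end
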